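(* Let $R$ be a ring such that for every $x\in R$ there exists an integer $n=n(x)\ge 2$ with $xRx=x^{n}Rx^{n}$. Then $R$ is feckly clean.
   Context: Rings are associative with identity, not necessarily commutative; $J(R)$ is the Jacobson radical. An element $u\in R$ is full if $RuR=R$. An element $a\in R$ is feckly clean if there exist $e\in R$ and a full element $u\in R$ with $a=e+u$ and $eR(1-e)\subseteq J(R)$; $R$ is feckly clean if every element is feckly clean. *)

theory Defs
  imports Main
begin

definition left_ideal :: "'a::ring_1 set \<Rightarrow> bool" where
  "left_ideal I \<longleftrightarrow> 0 \<in> I \<and> (\<forall>a\<in>I. \<forall>b\<in>I. a + b \<in> I) \<and> (\<forall>a\<in>I. - a \<in> I)
     \<and> (\<forall>r. \<forall>a\<in>I. r * a \<in> I)"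

definition maximal_left_ideal :: "'a::ring_1 set \<Rightarrow> bool" where
  "maximal_left_ideal M \<longleftrightarrow> left_ideal M \<and> M \<noteq> UNIV \<and>
     (\<forall>I. left_ideal I \<and> M \<subseteq> I \<and> I \<noteq> UNIV \<longrightarrow> I = M)"

definition jacobson :: "'a::ring_1 set" where
  "jacobson = \<Inter> {M. maximal_left_ideal M}"

text \<open>RuR: the two-sided ideal generated by u, i.e. all finite sums of r*u*s.\<close>
definition RuR :: "'a::ring_1 \<Rightarrow> 'a set" where
  "RuR u = {sum_list (map (\<lambda>(r, s). r * u * s) ps) | ps. True}"

definition full :: "'a::ring_1 \<Rightarrow> bool" where
  "full u \<longleftrightarrow> RuR u = UNIV"

definition feckly_clean_elem :: "'a::ring_1 \<Rightarrow> bool" where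
  "feckly_clean_elem a \<longleftrightarrow> (\<exists>e u. full u \<and> a = e + u \<and>
      {e * r * (1 - e) | r. True} \<subseteq> jacobson)"

definition feckly_clean_ring :: "'a::ring_1 itself \<Rightarrow> bool" where
  "feckly_clean_ring _ \<longleftrightarrow> (\<forall>a::'a. feckly_clean_elem a)"

end

theory Submission
  imports Defs
begin

(* Fix a ring R in which x R x = x^n R x^n (some n >= 2) for every x.
   (1) Taking r = 1 shows that a^2 is von Neumann regular: a^2 s a^2 = a^2 for some s.
   (2) Then g = a^2 s is an idempotent with g a^2 = a^2; put e = 1 - g and u = a - e.
       An explicit combination g u (a s) - e u a - e u = g + e = 1 shows that u is full,
       because an element whose ideal contains 1 generates all of R.
   (3) For the idempotent e, every x = e t (1 - e) squares to zero.  The hypothesis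
       for x gives x R x = x^n R x^n = 0, and elements with x R x = 0 lie in the
       Jacobson radical: otherwise M + R x = R for a maximal left ideal M not
       containing x, so 1 = m + t x and (1 + t x) m = 1 would lie in M. *)

lemma left_ideal_one_imp_UNIV:
  fixes M :: "'a::ring_1 set"
  assumes "left_ideal M" and "1 \<in> M"
  shows "M = UNIV"
  using assms unfolding left_ideal_def by (metis UNIV_eq_I mult_1_right)

lemma left_ideal_add_left_multiples:
  fixes M :: "'a::ring_1 set"
  assumes M: "left_ideal M"
  shows "left_ideal {m + t * x | m t. m \<in> M}"
  unfolding left_ideal_def
proof (intro conjI ballI allI)
  have "0 \<in> M" using M unfolding left_ideal_def by blast
  then show "0 \<in> {m + t * x | m t. m \<in> M}" by (intro CollectI exI[of _ 0]) simp
next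
  fix a b assume "a \<in> {m + t * x | m t. m \<in> M}" "b \<in> {m + t * x | m t. m \<in> M}"
  then obtain m1 t1 m2 t2 where "a = m1 + t1 * x" "b = m2 + t2 * x" "m1 \<in> M" "m2 \<in> M"
    by blast
  moreover have "a + b = (m1 + m2) + (t1 + t2) * x"
    using calculation by (simp add: algebra_simps)
  ultimately show "a + b \<in> {m + t * x | m t. m \<in> M}"
    using M unfolding left_ideal_def by blast
next
  fix a assume "a \<in> {m + t * x | m t. m \<in> M}"
  then obtain m1 t1 where "a = m1 + t1 * x" "m1 \<in> M" by blast
  moreover have "- a = (- m1) + (- t1) * x" using calculation by simp
  ultimately show "- a \<in> {m + t * x | m t. m \<in> M}"
    using M unfolding left_ideal_def by blast
next
  fix r a assume "a \<in> {m + t * x | m t. m \<in> M}"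
  then obtain m1 t1 where "a = m1 + t1 * x" "m1 \<in> M" by blast
  moreover have "r * a = r * m1 + (r * t1) * x"
    using calculation by (simp add: algebra_simps)
  ultimately show "r * a \<in> {m + t * x | m t. m \<in> M}"
    using M unfolding left_ideal_def by blast
qed

lemma jacobson_if_inner_zero:
  fixes x :: "'a::ring_1"
  assumes inner_zero: "\<And>t. x * t * x = 0"
  shows "x \<in> jacobson"
  unfolding jacobson_def
proof (rule InterI, simp)
  fix M :: "'a set" assume "maximal_left_ideal M"
  then have M: "left_ideal M" and proper: "M \<noteq> UNIV"
    and maximal: "\<And>I. left_ideal I \<Longrightarrow> M \<subseteq> I \<Longrightarrow> I \<noteq> UNIV \<Longrightarrow> I = M"
    unfolding maximal_left_ideal_def by blast+
  show "x \<in> M"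
  proof (rule ccontr)
    assume "x \<notin> M"
    let ?I = "{m + t * x | m t. m \<in> M}"
    have "M \<subseteq> ?I" by (force intro: exI[of _ 0])
    moreover have "x \<in> ?I"
      using M unfolding left_ideal_def by (force intro: exI[of _ 0] exI[of _ 1])
    ultimately have "?I = UNIV"
      using maximal[OF left_ideal_add_left_multiples[OF M]] \<open>x \<notin> M\<close> by blast
    then have "1 \<in> ?I" by simp
    then obtain m t where "m \<in> M" and one: "1 = m + t * x" by blast
    then have m: "m = 1 - t * x" by (simp add: algebra_simps)
    have "(1 + t * x) * m = 1 - t * (x * t * x)" unfolding m by (simp add: algebra_simps)
    then have "(1 + t * x) * m = 1" using inner_zero by simp
    moreover have "(1 + t * x) * m \<in> M" using M \<open>m \<in> M\<close> unfolding left_ideal_def by blast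
    ultimately show False using left_ideal_one_imp_UNIV[OF M] proper by simp
  qed
qed

lemma RuR_left_mult:
  fixes z :: "'a::ring_1"
  shows "z * sum_list (map (\<lambda>(p, q). p * u * q) ps)
           = sum_list (map (\<lambda>(p, q). p * u * q) (map (\<lambda>(p, q). (z * p, q)) ps))"
  by (induction ps) (auto simp: algebra_simps)

lemma full_if_one_in_RuR:
  fixes u :: "'a::ring_1"
  assumes "1 \<in> RuR u"
  shows "full u"
proof -
  obtain ps where one: "1 = sum_list (map (\<lambda>(p, q). p * u * q) ps)"
    using assms unfolding RuR_def by blast
  have "z \<in> RuR u" for z
  proof -
    have "z = z * sum_list (map (\<lambda>(p, q). p * u * q) ps)" using one by simp
    then show ?thesis unfolding RuR_left_mult RuR_def by blast
  qed
  then show ?thesis unfolding full_def by blast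
qed

lemma corner_square_zero:
  fixes e :: "'a::ring_1"
  assumes "e * e = e"
  shows "(e * t * (1 - e)) * (e * t * (1 - e)) = 0"
proof -
  have "(1 - e) * e = 0" using assms by (simp add: algebra_simps)
  then have "e * t * ((1 - e) * e) * t * (1 - e) = 0" by simp
  then show ?thesis by (simp add: mult.assoc)
qed

lemma idempotent_plus_full_if_square_regular:
  fixes a s :: "'a::ring_1"
  assumes reg: "a * a * s * (a * a) = a * a"
  defines "e \<equiv> 1 - a * a * s"
  shows "e * e = e" and "full (a - e)"
proof -
  define g where "g = a * a * s"
  have gg: "g * g = g" unfolding g_def using reg by (metis mult.assoc)
  have g_aa: "g * (a * a) = a * a" unfolding g_def using reg by simp
  have e: "e = 1 - g" unfolding e_def g_def ..
  show ee: "e * e = e" unfolding e using gg by (simp add: algebra_simps)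
  define u where "u = a - e"
  have gu: "g * u = g * a" unfolding u_def e using gg by (simp add: algebra_simps)
  have e_aa: "e * (a * a) = 0" unfolding e using g_aa by (simp add: algebra_simps)
  have eu: "e * u = e * a - e" unfolding u_def using ee by (simp add: algebra_simps)
  have g_part: "g * u * (a * s) = g"
  proof -
    have "g * u * (a * s) = (g * a) * a * s" by (simp add: gu mult.assoc)
    also have "\<dots> = g * g" unfolding g_def by (simp add: mult.assoc)
    finally show ?thesis using gg by simp
  qed
  have e_part: "(- e) * u * a + (- e) * u * 1 = e"
  proof -
    have eua: "(e * a - e) * a = - (e * a)" using e_aa by (simp add: algebra_simps)
    have "(- e) * u * a + (- e) * u * 1 = - ((e * u) * a) - e * u" by simp
    also have "\<dots> = e * a - (e * a - e)" by (simp only: eua eu minus_minus)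
    also have "\<dots> = e" by simp
    finally show ?thesis .
  qed
  have "1 = sum_list (map (\<lambda>(p, q). p * u * q) [(g, a * s), (- e, a), (- e, 1)])"
    using g_part e_part unfolding e by (simp add: algebra_simps)
  then have "1 \<in> RuR u" unfolding RuR_def by blast
  then show "full (a - e)" unfolding u_def by (rule full_if_one_in_RuR)
qed

lemma power_ge_two_split:
  fixes a :: "'a::monoid_mult"
  assumes "n \<ge> 2"
  shows "a ^ n = a * a * a ^ (n - 2)" and "a ^ n = a ^ (n - 2) * (a * a)"
  using assms
  by (metis le_add_diff_inverse power_add power2_eq_square,
      metis le_add_diff_inverse2 power_add power2_eq_square)

text \<open>Taking r = 1 in a R a = a^n R a^n shows that a^2 is von Neumann regular.\<close>

lemma square_regular:
  fixes a :: "'a::ring_1"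
  assumes n: "n \<ge> 2" and eq: "{a * r * a | r. True} = {a ^ n * r * a ^ n | r. True}"
  shows "\<exists>s. a * a * s * (a * a) = a * a"
proof -
  have "a * 1 * a \<in> {a ^ n * r * a ^ n | r. True}" using eq by blast
  then obtain r where r: "a * a = a ^ n * r * a ^ n" by auto
  have "a * a * (a ^ (n - 2) * r * a ^ (n - 2)) * (a * a)
          = (a * a * a ^ (n - 2)) * r * (a ^ (n - 2) * (a * a))"
    by (simp only: mult.assoc)
  also have "\<dots> = a ^ n * r * a ^ n"
    by (simp only: power_ge_two_split[OF n, symmetric])
  also have "\<dots> = a * a" using r by simp
  finally show ?thesis by blast
qed

lemma inner_zero_if_square_zero:
  fixes x :: "'a::ring_1"
  assumes n: "n \<ge> 2" and eq: "{x * r * x | r. True} = {x ^ n * r * x ^ n | r. True}"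
    and sq: "x * x = 0"
  shows "x * t * x = 0"
proof -
  have "x ^ n = 0" using power_ge_two_split(1)[OF n, of x] sq by simp
  moreover have "x * t * x \<in> {x ^ n * r * x ^ n | r. True}" using eq by blast
  ultimately show ?thesis by auto
qed

theorem corollary4p2:
  assumes "\<forall>x::'a::ring_1. \<exists>n::nat. n \<ge> 2 \<and>
             {x * r * x | r. True} = {x ^ n * r * x ^ n | r. True}"
  shows "feckly_clean_ring TYPE('a)"
  unfolding feckly_clean_ring_def
proof
  fix a :: 'a
  have square_zero_in_jacobson: "x \<in> jacobson" if "x * x = 0" for x :: 'a
  proof -
    obtain n where "n \<ge> 2" "{x * r * x | r. True} = {x ^ n * r * x ^ n | r. True}"
      using assms by blast
    then show ?thesis
      by (intro jacobson_if_inner_zero inner_zero_if_square_zero[OF _ _ that])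
  qed
  obtain n where "n \<ge> 2" "{a * r * a | r. True} = {a ^ n * r * a ^ n | r. True}"
    using assms by blast
  then obtain s where "a * a * s * (a * a) = a * a"
    using square_regular by blast
  note decomposition = idempotent_plus_full_if_square_regular[OF this]
  define e where "e = 1 - a * a * s"
  have "{e * t * (1 - e) | t. True} \<subseteq> jacobson"
    using square_zero_in_jacobson corner_square_zero[OF decomposition(1)]
    unfolding e_def by blast
  then show "feckly_clean_elem a"
    unfolding feckly_clean_elem_def using decomposition(2)
    by (intro exI[of _ e] exI[of _ "a - e"]) (simp add: e_def)
qed

end
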